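(* Let $\mathcal{O}=(X_{\min},X_{\max})$ be bounded, $T>0$, and let $a=\tfrac12\sigma^2$, $b$, $r$ be bounded functions on $(0,T)\times\mathcal{O}$ such that $a(t,x)\ge\eta_0>0$ for all $(t,x)$ and $|a(t,x)-a(t,y)|\le L|x-y|$ for all $t\in(0,T)$, $x,y\in\mathcal{O}$ (for some $\eta_0>0$, $L\ge0$). For $J\ge1$ let $h=\frac{X_{\max}-X_{\min}}{J+1}$, $x_i=X_{\min}+ih$, and for a fixed time $t$ let $A$ be the tridiagonal $J\times J$ matrix with entries $A_{i,i-1}=-\frac{a(t,x_i)}{h^2}-\frac{b(t,x_i)}{2h}$, $A_{i,i}=\frac{2a(t,x_i)}{h^2}+r(t,x_i)$, $A_{i,i+1}=-\frac{a(t,x_i)}{h^2}+\frac{b(t,x_i)}{2h}$. Then there exist $\eta>0$ and $\gamma\ge0$, depending only on $\eta_0,L,\|b\|_\infty,\|r\|_\infty$ (in particular independent of $J$, $h$ and $t$), such that for all $e\in\mathbb{R}^J$, $$\langle e,Ae\rangle\ge\eta\,N(e/h)^2-\gamma\|e\|_2^2,$$ where $N(x):=\big(\sum_{j=1}^{J+1}|x_j-x_{j-1}|^2\big)^{1/2}$ with the convention $x_0=x_{J+1}=0$.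
   Context: $\langle\cdot,\cdot\rangle$ and $\|\cdot\|_2$ are the Euclidean inner product and norm on $\mathbb{R}^J$. *)

theory Defs
  imports "HOL-Analysis.Analysis"
begin

definition mesh :: "real \<Rightarrow> real \<Rightarrow> nat \<Rightarrow> real" where
  "mesh Xmin Xmax J = (Xmax - Xmin) / (real J + 1)"

definition node :: "real \<Rightarrow> real \<Rightarrow> nat \<Rightarrow> nat \<Rightarrow> real" where
  "node Xmin Xmax J i = Xmin + real i * mesh Xmin Xmax J"

text \<open>The tridiagonal J x J matrix A at time t, indexed by i, j in {1..J}
  (entries outside the tridiagonal band are 0).\<close>
definition FDmat ::
  "(real \<Rightarrow> real \<Rightarrow> real) \<Rightarrow> (real \<Rightarrow> real \<Rightarrow> real) \<Rightarrow> (real \<Rightarrow> real \<Rightarrow> real)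
   \<Rightarrow> real \<Rightarrow> real \<Rightarrow> nat \<Rightarrow> real \<Rightarrow> nat \<Rightarrow> nat \<Rightarrow> real" where
  "FDmat a b r Xmin Xmax J t i j =
     (let h = mesh Xmin Xmax J; xi = node Xmin Xmax J i in
      if j + 1 = i then - a t xi / h\<^sup>2 - b t xi / (2 * h)
      else if j = i then 2 * a t xi / h\<^sup>2 + r t xi
      else if j = i + 1 then - a t xi / h\<^sup>2 + b t xi / (2 * h)
      else 0)"

definition quad_form :: "(nat \<Rightarrow> nat \<Rightarrow> real) \<Rightarrow> nat \<Rightarrow> (nat \<Rightarrow> real) \<Rightarrow> real" where
  "quad_form A J e = (\<Sum>i=1..J. e i * (\<Sum>j=1..J. A i j * e j))"

definition sqnorm :: "nat \<Rightarrow> (nat \<Rightarrow> real) \<Rightarrow> real" where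
  "sqnorm J e = (\<Sum>i=1..J. (e i)\<^sup>2)"

definition ext0 :: "nat \<Rightarrow> (nat \<Rightarrow> real) \<Rightarrow> nat \<Rightarrow> real" where
  "ext0 J x j = (if 1 \<le> j \<and> j \<le> J then x j else 0)"

definition Nnorm :: "nat \<Rightarrow> (nat \<Rightarrow> real) \<Rightarrow> real" where
  "Nnorm J x = sqrt (\<Sum>j=1..J+1. \<bar>ext0 J x j - ext0 J x (j - 1)\<bar>\<^sup>2)"

end

theory Submission
  imports Defs
begin

text \<open>Let E be e extended by E 0 = E (J+1) = 0 and D j = (E j - E (j-1)) / h its difference
  quotients, so that N(e/h)^2 = \<Sum> D j^2. Summation by parts turns the diffusion part of
  \<langle>e, A e\<rangle> into \<Sum> (E j - E (j-1)) (a j E j - a (j-1) E (j-1)) / h^2,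
  which is \<Sum> a j D j^2 plus \<Sum> (a j - a (j-1)) / h E (j-1) D j, a sum controlled by the
  Lipschitz constant of a; the convection part is \<Sum> b i E i (D (i+1) + D i) / 2. Young's
  inequality absorbs both mixed sums into a fraction of \<eta>0 \<Sum> D j^2 at the price of multiples
  of \<Sum> E i^2, giving \<eta> = \<eta>0/2 and \<gamma> = (L^2 + \<parallel>b\<parallel>^2)/\<eta>0 + \<parallel>r\<parallel>.\<close>

lemma young_inequality:
  fixes x y \<epsilon> :: real
  assumes "\<epsilon> > 0"
  shows "x * y \<le> \<epsilon> * y\<^sup>2 + x\<^sup>2 / (4 * \<epsilon>)"
proof -
  have "0 \<le> (2 * \<epsilon> * y - x)\<^sup>2" by simp
  also have "\<dots> = 4 * \<epsilon> * (\<epsilon> * y\<^sup>2 + x\<^sup>2 / (4 * \<epsilon>) - x * y)"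
    using assms by (simp add: field_simps power2_eq_square)
  finally show ?thesis using assms by (simp add: zero_le_mult_iff)
qed

lemma summation_by_parts_second_difference:
  fixes A E :: "nat \<Rightarrow> real"
  shows "(\<Sum>j=1..Suc n. (E j - E (j-1)) * (A j * E j - A (j-1) * E (j-1)))
    = (\<Sum>i=1..n. A i * E i * (2 * E i - E (i-1) - E (i+1)))
      + A (Suc n) * E (Suc n) * (E (Suc n) - E n) - A 0 * E 0 * (E 1 - E 0)"
proof (induction n)
  case 0
  then show ?case by (simp add: algebra_simps)
next
  case (Suc n)
  then show ?case by (simp add: algebra_simps)
qed

lemma summation_by_parts_zero_boundary:
  fixes A E :: "nat \<Rightarrow> real"
  assumes "E 0 = 0" and "E (J+1) = 0"
  shows "(\<Sum>i=1..J. A i * E i * (2 * E i - E (i-1) - E (i+1)))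
    = (\<Sum>j=1..J+1. (E j - E (j-1)) * (A j * E j - A (j-1) * E (j-1)))"
  using summation_by_parts_second_difference[of E A J] assms by simp

lemma sum_shift_down_zero:
  fixes f :: "nat \<Rightarrow> real"
  assumes "f 0 = 0"
  shows "(\<Sum>j=1..J+1. f (j-1)) = (\<Sum>i=1..J. f i)"
proof -
  have "(\<Sum>j=1..J+1. f (j-1)) = (\<Sum>i=0..J. f i)"
    using sum.shift_bounds_cl_Suc_ivl[of "\<lambda>j. f (j-1)" 0 J] by simp
  also have "\<dots> = (\<Sum>i=1..J. f i)" using assms by (simp add: sum.atLeast_Suc_atMost)
  finally show ?thesis .
qed

lemma mesh_pos: "Xmin < Xmax \<Longrightarrow> mesh Xmin Xmax J > 0"
  by (simp add: mesh_def)

lemma node_Suc_diff: "node Xmin Xmax J (Suc i) - node Xmin Xmax J i = mesh Xmin Xmax J"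
  by (simp add: node_def algebra_simps)

lemma node_mem_interval:
  assumes "Xmin < Xmax" and "1 \<le> i" and "i \<le> J"
  shows "node Xmin Xmax J i \<in> {Xmin<..<Xmax}"
proof -
  have h: "mesh Xmin Xmax J > 0" using assms(1) by (rule mesh_pos)
  have "real i * mesh Xmin Xmax J < (real J + 1) * mesh Xmin Xmax J"
    using h assms(3) by (intro mult_strict_right_mono) auto
  also have "\<dots> = Xmax - Xmin" by (simp add: mesh_def)
  finally have "real i * mesh Xmin Xmax J < Xmax - Xmin" .
  moreover have "real i * mesh Xmin Xmax J > 0" using h assms(2) by simp
  ultimately show ?thesis by (simp add: node_def)
qed

lemma FDmat_row_sum:
  fixes a b r :: "real \<Rightarrow> real \<Rightarrow> real" and Xmin Xmax t :: real and e :: "nat \<Rightarrow> real"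
  assumes "1 \<le> i" and "i \<le> J"
  defines "h \<equiv> mesh Xmin Xmax J" and "x \<equiv> node Xmin Xmax J i" and "E \<equiv> ext0 J e"
  shows "(\<Sum>j=1..J. FDmat a b r Xmin Xmax J t i j * e j)
    = (- a t x / h\<^sup>2 - b t x / (2 * h)) * E (i-1) + (2 * a t x / h\<^sup>2 + r t x) * E i
      + (- a t x / h\<^sup>2 + b t x / (2 * h)) * E (i+1)"
proof -
  have "FDmat a b r Xmin Xmax J t i j * e j
      = (if j = i-1 then (- a t x / h\<^sup>2 - b t x / (2 * h)) * E (i-1) else 0)
      + (if j = i then (2 * a t x / h\<^sup>2 + r t x) * E i else 0)
      + (if j = i+1 then (- a t x / h\<^sup>2 + b t x / (2 * h)) * E (i+1) else 0)"
    if "j \<in> {1..J}" for j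
    using that assms(1) by (auto simp: FDmat_def Let_def h_def x_def E_def ext0_def)
  then have "(\<Sum>j=1..J. FDmat a b r Xmin Xmax J t i j * e j)
      = (\<Sum>j=1..J. (if j = i-1 then (- a t x / h\<^sup>2 - b t x / (2 * h)) * E (i-1) else 0)
      + (if j = i then (2 * a t x / h\<^sup>2 + r t x) * E i else 0)
      + (if j = i+1 then (- a t x / h\<^sup>2 + b t x / (2 * h)) * E (i+1) else 0))"
    by (rule sum.cong[OF refl])
  also have "\<dots> = (if i-1 \<in> {1..J} then (- a t x / h\<^sup>2 - b t x / (2 * h)) * E (i-1) else 0)
      + (if i \<in> {1..J} then (2 * a t x / h\<^sup>2 + r t x) * E i else 0)
      + (if i+1 \<in> {1..J} then (- a t x / h\<^sup>2 + b t x / (2 * h)) * E (i+1) else 0)"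
    by (simp only: sum.distrib sum.delta finite_atLeastAtMost)
  also have "\<dots> = (- a t x / h\<^sup>2 - b t x / (2 * h)) * E (i-1) + (2 * a t x / h\<^sup>2 + r t x) * E i
      + (- a t x / h\<^sup>2 + b t x / (2 * h)) * E (i+1)" using assms(1,2) by (auto simp: E_def ext0_def)
  finally show ?thesis .
qed

lemma quad_form_FDmat:
  fixes a b r :: "real \<Rightarrow> real \<Rightarrow> real" and Xmin Xmax t :: real and J :: nat
    and e :: "nat \<Rightarrow> real"
  defines "h \<equiv> mesh Xmin Xmax J" and "x \<equiv> node Xmin Xmax J" and "E \<equiv> ext0 J e"
  shows "quad_form (FDmat a b r Xmin Xmax J t) J e
    = (\<Sum>i=1..J. a t (x i) * E i * (2 * E i - E (i-1) - E (i+1))) / h\<^sup>2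
      + (\<Sum>i=1..J. b t (x i) / (2 * h) * E i * (E (i+1) - E (i-1)) + r t (x i) * (E i)\<^sup>2)"
proof -
  have "e i * (\<Sum>j=1..J. FDmat a b r Xmin Xmax J t i j * e j)
      = a t (x i) * E i * (2 * E i - E (i-1) - E (i+1)) / h\<^sup>2
        + (b t (x i) / (2 * h) * E i * (E (i+1) - E (i-1)) + r t (x i) * (E i)\<^sup>2)"
    if "i \<in> {1..J}" for i
  proof -
    have "e i = E i" using that by (simp add: E_def ext0_def)
    moreover have "1 \<le> i" "i \<le> J" using that by auto
    note row = FDmat_row_sum[OF this, where a = a and b = b and r = r and Xmin = Xmin
        and Xmax = Xmax and t = t and e = e, folded h_def x_def E_def]
    ultimately show ?thesis
      unfolding row by (simp add: algebra_simps power2_eq_square diff_divide_distrib add_divide_distrib)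
  qed
  then show ?thesis
    by (simp add: quad_form_def sum.distrib sum_divide_distrib)
qed

lemma Nnorm_div_sq:
  "(Nnorm J (\<lambda>j. e j / h))\<^sup>2 = (\<Sum>j=1..J+1. ((ext0 J e j - ext0 J e (j-1)) / h)\<^sup>2)"
proof -
  have "ext0 J (\<lambda>j. e j / h) j = ext0 J e j / h" for j by (simp add: ext0_def)
  then show ?thesis by (simp add: Nnorm_def sum_nonneg diff_divide_distrib)
qed

lemma sqnorm_ext0: "sqnorm J e = (\<Sum>i=1..J. (ext0 J e i)\<^sup>2)"
  by (simp add: sqnorm_def ext0_def)

lemma mult_ge_young:
  fixes c C x y \<epsilon> :: real
  assumes "\<bar>c\<bar> \<le> C" and "\<epsilon> > 0"
  shows "c * x * y \<ge> - (\<epsilon> * y\<^sup>2 + C\<^sup>2 * x\<^sup>2 / (4 * \<epsilon>))"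
proof -
  have "- (c * x * y) \<le> \<bar>c\<bar> * \<bar>x\<bar> * \<bar>y\<bar>"
    by (metis abs_ge_minus_self abs_mult)
  also have "\<dots> \<le> (C * \<bar>x\<bar>) * \<bar>y\<bar>"
    using assms(1) by (simp add: mult_right_mono)
  also have "\<dots> \<le> \<epsilon> * y\<^sup>2 + C\<^sup>2 * x\<^sup>2 / (4 * \<epsilon>)"
    using young_inequality[OF assms(2), of "C * \<bar>x\<bar>" "\<bar>y\<bar>"] by (simp add: power_mult_distrib)
  finally show ?thesis by linarith
qed

lemma diffusion_form_lower_bound:
  fixes A E :: "nat \<Rightarrow> real" and h \<eta> L :: real
  assumes "h > 0" and "\<eta> > 0" and "E 0 = 0" and "E (J+1) = 0"
    and coercive: "\<And>j. 1 \<le> j \<Longrightarrow> j \<le> J+1 \<Longrightarrow> A j \<ge> \<eta>"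
    and lipschitz: "\<And>j. 1 \<le> j \<Longrightarrow> j \<le> J+1 \<Longrightarrow> \<bar>A j - A (j-1)\<bar> \<le> L * h"
  shows "(\<Sum>i=1..J. A i * E i * (2 * E i - E (i-1) - E (i+1))) / h\<^sup>2
    \<ge> 3 * \<eta> / 4 * (\<Sum>j=1..J+1. ((E j - E (j-1)) / h)\<^sup>2) - L\<^sup>2 / \<eta> * (\<Sum>i=1..J. (E i)\<^sup>2)"
proof -
  define D where "D j = (E j - E (j-1)) / h" for j
  have "(E j - E (j-1)) * (A j * E j - A (j-1) * E (j-1)) / h\<^sup>2
      \<ge> 3 * \<eta> / 4 * (D j)\<^sup>2 - L\<^sup>2 / \<eta> * (E (j-1))\<^sup>2"
    if "1 \<le> j" "j \<le> J+1" for j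
  proof -
    have "E j = E (j-1) + h * D j" using assms(1) by (simp add: D_def)
    then have split: "(E j - E (j-1)) * (A j * E j - A (j-1) * E (j-1)) / h\<^sup>2
        = A j * (D j)\<^sup>2 + (A j - A (j-1)) / h * E (j-1) * D j"
      using assms(1) by (simp add: field_simps power2_eq_square)
    have "A j * (D j)\<^sup>2 \<ge> \<eta> * (D j)\<^sup>2"
      using coercive[OF that] by (simp add: mult_right_mono)
    moreover have "\<bar>(A j - A (j-1)) / h\<bar> \<le> L"
      using lipschitz[OF that] assms(1) by (simp add: pos_divide_le_eq)
    then have "(A j - A (j-1)) / h * E (j-1) * D j \<ge> - (\<eta> / 4 * (D j)\<^sup>2 + L\<^sup>2 / \<eta> * (E (j-1))\<^sup>2)"
      using mult_ge_young[of _ L "\<eta> / 4"] assms(2) by fastforce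
    ultimately show ?thesis unfolding split by linarith
  qed
  note term_bound = this
  have shift: "(\<Sum>j=1..J+1. (E (j-1))\<^sup>2) = (\<Sum>i=1..J. (E i)\<^sup>2)"
    using sum_shift_down_zero[of "\<lambda>i. (E i)\<^sup>2" J] assms(3) by simp
  have "3 * \<eta> / 4 * (\<Sum>j=1..J+1. (D j)\<^sup>2) - L\<^sup>2 / \<eta> * (\<Sum>i=1..J. (E i)\<^sup>2)
      = (\<Sum>j=1..J+1. 3 * \<eta> / 4 * (D j)\<^sup>2 - L\<^sup>2 / \<eta> * (E (j-1))\<^sup>2)"
    unfolding shift[symmetric] by (simp only: sum_subtractf sum_distrib_left)
  also have "\<dots> \<le> (\<Sum>j=1..J+1. (E j - E (j-1)) * (A j * E j - A (j-1) * E (j-1))) / h\<^sup>2"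
    unfolding sum_divide_distrib by (intro sum_mono term_bound) auto
  also have "\<dots> = (\<Sum>i=1..J. A i * E i * (2 * E i - E (i-1) - E (i+1))) / h\<^sup>2"
    using summation_by_parts_zero_boundary[OF assms(3,4), of A] by simp
  finally show ?thesis by (simp add: D_def)
qed

lemma convection_form_lower_bound:
  fixes B E :: "nat \<Rightarrow> real" and h \<eta> C :: real
  assumes "h > 0" and "\<eta> > 0" and bounded: "\<And>i. 1 \<le> i \<Longrightarrow> i \<le> J \<Longrightarrow> \<bar>B i\<bar> \<le> C"
  shows "(\<Sum>i=1..J. B i / (2 * h) * E i * (E (i+1) - E (i-1)))
    \<ge> - \<eta> / 4 * (\<Sum>j=1..J+1. ((E j - E (j-1)) / h)\<^sup>2) - C\<^sup>2 / \<eta> * (\<Sum>i=1..J. (E i)\<^sup>2)"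
proof -
  define D where "D j = (E j - E (j-1)) / h" for j
  have "B i / (2 * h) * E i * (E (i+1) - E (i-1))
      \<ge> - \<eta> / 8 * ((D (i+1))\<^sup>2 + (D i)\<^sup>2) - C\<^sup>2 / \<eta> * (E i)\<^sup>2"
    if "1 \<le> i" "i \<le> J" for i
  proof -
    have "E (i+1) - E (i-1) = h * (D (i+1) + D i)"
      using assms(1) by (simp add: D_def field_simps)
    then have split: "B i / (2 * h) * E i * (E (i+1) - E (i-1))
        = B i / 2 * E i * D (i+1) + B i / 2 * E i * D i"
      using assms(1) by (simp add: field_simps)
    have "\<bar>B i / 2\<bar> \<le> C / 2" using bounded[OF that] by simp
    then have young: "B i / 2 * E i * X \<ge> - (\<eta> / 8 * X\<^sup>2 + C\<^sup>2 / (2 * \<eta>) * (E i)\<^sup>2)" for X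
      using mult_ge_young[where c = "B i / 2" and C = "C / 2" and \<epsilon> = "\<eta> / 8" and x = "E i" and y = X] assms(2)
      by (simp add: power_divide)
    moreover have "- \<eta> / 8 * ((D (i+1))\<^sup>2 + (D i)\<^sup>2) - C\<^sup>2 / \<eta> * (E i)\<^sup>2
        = - (\<eta> / 8 * (D (i+1))\<^sup>2 + C\<^sup>2 / (2 * \<eta>) * (E i)\<^sup>2)
          - (\<eta> / 8 * (D i)\<^sup>2 + C\<^sup>2 / (2 * \<eta>) * (E i)\<^sup>2)"
      using assms(2) by (simp add: field_simps)
    ultimately show ?thesis unfolding split
      using young[of "D (i+1)"] young[of "D i"] by linarith
  qed
  note term_bound = this
  have "(\<Sum>i=1..J. (D (i+1))\<^sup>2) = (\<Sum>j=Suc 1..Suc J. (D j)\<^sup>2)"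
    unfolding sum.shift_bounds_cl_Suc_ivl by simp
  also have "\<dots> \<le> (\<Sum>j=1..J+1. (D j)\<^sup>2)" by (intro sum_mono2) auto
  finally have "\<eta> / 8 * (\<Sum>i=1..J. (D (i+1))\<^sup>2) \<le> \<eta> / 8 * (\<Sum>j=1..J+1. (D j)\<^sup>2)"
    using assms(2) by (intro mult_left_mono) auto
  moreover have "\<eta> / 8 * (\<Sum>i=1..J. (D i)\<^sup>2) \<le> \<eta> / 8 * (\<Sum>j=1..J+1. (D j)\<^sup>2)"
    using assms(2) by (intro mult_left_mono sum_mono2) auto
  ultimately have "- \<eta> / 4 * (\<Sum>j=1..J+1. (D j)\<^sup>2) - C\<^sup>2 / \<eta> * (\<Sum>i=1..J. (E i)\<^sup>2)
      \<le> - \<eta> / 8 * (\<Sum>i=1..J. (D (i+1))\<^sup>2) + - \<eta> / 8 * (\<Sum>i=1..J. (D i)\<^sup>2)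
        - C\<^sup>2 / \<eta> * (\<Sum>i=1..J. (E i)\<^sup>2)"
    by linarith
  also have "\<dots> = (\<Sum>i=1..J. - \<eta> / 8 * ((D (i+1))\<^sup>2 + (D i)\<^sup>2) - C\<^sup>2 / \<eta> * (E i)\<^sup>2)"
    by (simp only: sum_subtractf sum.distrib sum_distrib_left distrib_left)
  also have "\<dots> \<le> (\<Sum>i=1..J. B i / (2 * h) * E i * (E (i+1) - E (i-1)))"
    by (intro sum_mono term_bound) auto
  finally show ?thesis by (simp add: D_def)
qed

text \<open>Values at the ghost nodes 0 and J+1 only ever multiply E 0 = E (J+1) = 0, so a coefficient
  may be extended constantly beyond the interior nodes; this keeps it coercive and Lipschitz along
  the whole grid.\<close>

lemma clamped_node_values:
  fixes f :: "real \<Rightarrow> real" and Xmin Xmax \<eta> L :: real and J :: nat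
  assumes "Xmin < Xmax" and "1 \<le> J" and "L \<ge> 0"
    and coercive: "\<forall>x\<in>{Xmin<..<Xmax}. f x \<ge> \<eta>"
    and lipschitz: "\<forall>x\<in>{Xmin<..<Xmax}. \<forall>y\<in>{Xmin<..<Xmax}. \<bar>f x - f y\<bar> \<le> L * \<bar>x - y\<bar>"
  defines "F \<equiv> \<lambda>i. f (node Xmin Xmax J (max 1 (min J i)))"
  shows "F j \<ge> \<eta>"
    and "1 \<le> j \<Longrightarrow> j \<le> J+1 \<Longrightarrow> \<bar>F j - F (j-1)\<bar> \<le> L * mesh Xmin Xmax J"
proof -
  define h where "h = mesh Xmin Xmax J"
  define x where "x = node Xmin Xmax J"
  have "h > 0" unfolding h_def using assms(1) by (rule mesh_pos)
  have x_in: "x i \<in> {Xmin<..<Xmax}" if "1 \<le> i" "i \<le> J" for i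
    unfolding x_def using assms(1) that by (rule node_mem_interval)
  show "F j \<ge> \<eta>"
    unfolding F_def x_def[symmetric] using coercive x_in assms(2) by simp
  assume j: "1 \<le> j" "j \<le> J+1"
  show "\<bar>F j - F (j-1)\<bar> \<le> L * mesh Xmin Xmax J"
  proof (cases "j = 1 \<or> j = J+1")
    case True
    then show ?thesis using assms(3) \<open>h > 0\<close> by (auto simp: F_def h_def)
  next
    case False
    then have "2 \<le> j" "j \<le> J" using j by auto
    moreover have "x j - x (j-1) = h"
      using node_Suc_diff[of Xmin Xmax J "j-1"] \<open>2 \<le> j\<close> by (simp add: x_def h_def)
    ultimately show ?thesis
      using lipschitz x_in[of j] x_in[of "j-1"] \<open>h > 0\<close>
      by (fastforce simp: F_def x_def[symmetric] h_def[symmetric])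
  qed
qed

lemma FDmat_quad_form_coercive:
  fixes a b r :: "real \<Rightarrow> real \<Rightarrow> real" and Xmin Xmax t \<eta> L Bb Br :: real
    and J :: nat and e :: "nat \<Rightarrow> real"
  assumes "Xmin < Xmax" and "1 \<le> J" and "\<eta> > 0" and "L \<ge> 0"
    and coercive: "\<forall>x\<in>{Xmin<..<Xmax}. a t x \<ge> \<eta>"
    and lipschitz: "\<forall>x\<in>{Xmin<..<Xmax}. \<forall>y\<in>{Xmin<..<Xmax}. \<bar>a t x - a t y\<bar> \<le> L * \<bar>x - y\<bar>"
    and b_bounded: "\<forall>x\<in>{Xmin<..<Xmax}. \<bar>b t x\<bar> \<le> Bb"
    and r_bounded: "\<forall>x\<in>{Xmin<..<Xmax}. \<bar>r t x\<bar> \<le> Br"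
  shows "quad_form (FDmat a b r Xmin Xmax J t) J e
    \<ge> \<eta> / 2 * (Nnorm J (\<lambda>j. e j / mesh Xmin Xmax J))\<^sup>2 - ((L\<^sup>2 + Bb\<^sup>2) / \<eta> + Br) * sqnorm J e"
proof -
  define h where "h = mesh Xmin Xmax J"
  define x where "x = node Xmin Xmax J"
  define E where "E = ext0 J e"
  define S where "S = (\<Sum>j=1..J+1. ((E j - E (j-1)) / h)\<^sup>2)"
  define \<alpha> where "\<alpha> i = a t (x (max 1 (min J i)))" for i
  have "h > 0" unfolding h_def using assms(1) by (rule mesh_pos)
  have x_in: "x i \<in> {Xmin<..<Xmax}" if "1 \<le> i" "i \<le> J" for i
    unfolding x_def using assms(1) that by (rule node_mem_interval)
  have E_boundary: "E 0 = 0" "E (J+1) = 0" by (simp_all add: E_def ext0_def)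
  have "\<alpha> j \<ge> \<eta>" for j
    unfolding \<alpha>_def x_def using clamped_node_values(1)[OF assms(1,2,4) coercive lipschitz] .
  moreover have "\<bar>\<alpha> j - \<alpha> (j-1)\<bar> \<le> L * h" if "1 \<le> j" "j \<le> J+1" for j
    unfolding \<alpha>_def x_def h_def using clamped_node_values(2)[OF assms(1,2,4) coercive lipschitz that] .
  ultimately have diffusion:
    "(\<Sum>i=1..J. a t (x i) * E i * (2 * E i - E (i-1) - E (i+1))) / h\<^sup>2
      \<ge> 3 * \<eta> / 4 * S - L\<^sup>2 / \<eta> * (\<Sum>i=1..J. (E i)\<^sup>2)"
    using diffusion_form_lower_bound[OF \<open>h > 0\<close> assms(3) E_boundary, of \<alpha> L]
    by (simp add: S_def \<alpha>_def)
  have convection: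
    "(\<Sum>i=1..J. b t (x i) / (2 * h) * E i * (E (i+1) - E (i-1)))
      \<ge> - \<eta> / 4 * S - Bb\<^sup>2 / \<eta> * (\<Sum>i=1..J. (E i)\<^sup>2)"
    unfolding S_def using b_bounded x_in
    by (intro convection_form_lower_bound[OF \<open>h > 0\<close> assms(3)]) auto
  have "- Br * (E i)\<^sup>2 \<le> r t (x i) * (E i)\<^sup>2" if "1 \<le> i" "i \<le> J" for i
    using r_bounded x_in[OF that] by (intro mult_right_mono) (force simp: abs_le_iff)+
  then have reaction: "(\<Sum>i=1..J. r t (x i) * (E i)\<^sup>2) \<ge> - Br * (\<Sum>i=1..J. (E i)\<^sup>2)"
    unfolding sum_distrib_left by (intro sum_mono) auto
  have quad: "quad_form (FDmat a b r Xmin Xmax J t) J e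
      = (\<Sum>i=1..J. a t (x i) * E i * (2 * E i - E (i-1) - E (i+1))) / h\<^sup>2
        + (\<Sum>i=1..J. b t (x i) / (2 * h) * E i * (E (i+1) - E (i-1)))
        + (\<Sum>i=1..J. r t (x i) * (E i)\<^sup>2)"
    by (simp add: quad_form_FDmat h_def x_def E_def sum.distrib)
  have Nnorm_sq: "(Nnorm J (\<lambda>j. e j / h))\<^sup>2 = S" by (simp add: Nnorm_div_sq S_def E_def)
  have sqnorm: "sqnorm J e = (\<Sum>i=1..J. (E i)\<^sup>2)" by (simp add: sqnorm_ext0 E_def)
  have split: "\<eta> / 2 * S - ((L\<^sup>2 + Bb\<^sup>2) / \<eta> + Br) * (\<Sum>i=1..J. (E i)\<^sup>2)
      = (3 * \<eta> / 4 * S - L\<^sup>2 / \<eta> * (\<Sum>i=1..J. (E i)\<^sup>2))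
        + (- \<eta> / 4 * S - Bb\<^sup>2 / \<eta> * (\<Sum>i=1..J. (E i)\<^sup>2)) + (- Br * (\<Sum>i=1..J. (E i)\<^sup>2))"
    by (simp add: algebra_simps add_divide_distrib)
  show ?thesis
    unfolding h_def[symmetric] quad Nnorm_sq sqnorm using diffusion convection reaction split by linarith
qed

theorem lemma4p6:
  fixes eta0 L Bb Br :: real
  assumes "eta0 > 0" and "L \<ge> 0" and "Bb \<ge> 0" and "Br \<ge> 0"
  shows "\<exists>eta > 0. \<exists>gamma \<ge> 0.
    \<forall>(Xmin::real) (Xmax::real) (T::real) (a::real\<Rightarrow>real\<Rightarrow>real) (b::real\<Rightarrow>real\<Rightarrow>real)
      (r::real\<Rightarrow>real\<Rightarrow>real).
      Xmin < Xmax \<longrightarrow> T > 0 \<longrightarrow>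
      (\<exists>M. \<forall>t\<in>{0<..<T}. \<forall>x\<in>{Xmin<..<Xmax}. \<bar>a t x\<bar> \<le> M) \<longrightarrow>
      (\<forall>t\<in>{0<..<T}. \<forall>x\<in>{Xmin<..<Xmax}. a t x \<ge> eta0) \<longrightarrow>
      (\<forall>t\<in>{0<..<T}. \<forall>x\<in>{Xmin<..<Xmax}. \<forall>y\<in>{Xmin<..<Xmax}.
          \<bar>a t x - a t y\<bar> \<le> L * \<bar>x - y\<bar>) \<longrightarrow>
      (\<forall>t\<in>{0<..<T}. \<forall>x\<in>{Xmin<..<Xmax}. \<bar>b t x\<bar> \<le> Bb) \<longrightarrow>
      (\<forall>t\<in>{0<..<T}. \<forall>x\<in>{Xmin<..<Xmax}. \<bar>r t x\<bar> \<le> Br) \<longrightarrow>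
      (\<forall>(J::nat) t (e::nat\<Rightarrow>real). J \<ge> 1 \<longrightarrow> t \<in> {0<..<T} \<longrightarrow>
         quad_form (FDmat a b r Xmin Xmax J t) J e
           \<ge> eta * (Nnorm J (\<lambda>j. e j / mesh Xmin Xmax J))\<^sup>2 - gamma * sqnorm J e)"
proof (rule exI[of _ "eta0 / 2"], intro conjI exI[of _ "(L\<^sup>2 + Bb\<^sup>2) / eta0 + Br"] allI impI)
  show "eta0 / 2 > 0" using assms by simp
  show "(L\<^sup>2 + Bb\<^sup>2) / eta0 + Br \<ge> 0" using assms by simp
qed (rule FDmat_quad_form_coercive; use assms in auto)

end
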